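(* Let $m\ge1$. For $q\in[0,1/m]$ let $G(m,q)=(1-(m-1)q)\,H\!\left(\frac{q}{1-(m-1)q}\right)$, where $H(x)=-x\log_2x-(1-x)\log_2(1-x)$ is the binary entropy function (with $H(0)=H(1)=0$). For $n\ge1$ and $q$ let $\mathcal T_n^{(q)}=\{\mathbf s\in\mathcal S_n:\ \#\{k:s_k=-\}=nq\}$. Then there is a sequence $\epsilon_m(n)$ with $\epsilon_m(n)\to0$ as $n\to\infty$, not depending on $q$, such that for all $n\ge1$ and all $q\in[0,1/m]$ with $nq\in\mathbb Z$, $$|\mathcal T_n^{(q)}|<2^{\,n\,(G(m,q)+\epsilon_m(n))}.$$
   Context: Fix an integer $m\ge1$. Define integers $N(n)$ by $N(n)=1$ for $1-m\le n\le 0$ and $N(n)=N(n-1)+N(n-m)$ for $n\ge1$; write $\mathbb N_n=\{1,\dots,N(n)\}$ (so $\mathbb N_n=\{1\}$ for $n\le 0$, and $\mathbb N_{n-m}\subseteq\mathbb N_{n-1}$). Define vectors $\mathbf s_n^{(i)}\in\{+,-,\bigstar\}^n$ for $n\ge0$, $i\in\mathbb N_n$, recursively: $\mathbf s_0^{(1)}$ is the empty vector, and for $n\ge1$: $\mathbf s_n^{(j)}=(\mathbf s_{n-1}^{(j)},+)$ and $\mathbf s_n^{(j+N(n-1))}=(\mathbf s_{n-1}^{(j)},-)$ for $j\in\mathbb N_{n-m}$, while $\mathbf s_n^{(j)}=(\mathbf s_{n-1}^{(j)},\bigstar)$ for $j\in\mathbb N_{n-1}\setminus\mathbb N_{n-m}$.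 Let $\mathcal S_n=\{\mathbf s_n^{(i)}:i\in\mathbb N_n\}$ for $n\ge1$. *)

theory Defs
  imports Complex_Main
begin

text \<open>N(k) for integer k: N(k) = 1 for k \<le> 0, N(k) = N(k-1) + N(k-m) for k \<ge> 1
  (m \<ge> 1 is assumed; for m = 0 we return 1 to ensure totality).\<close>
function NN :: "nat \<Rightarrow> int \<Rightarrow> nat" where
  "NN m k = (if k \<le> 0 \<or> m = 0 then 1 else NN m (k - 1) + NN m (k - int m))"
  by auto
termination by (relation "measure (\<lambda>(m, k). nat k)") auto

declare NN.simps [simp del]

datatype sgn = Plus | Minus | Star

fun svec :: "nat \<Rightarrow> nat \<Rightarrow> nat \<Rightarrow> sgn list" where
  "svec m 0 i = []"
| "svec m (Suc n) i =
     (if i \<le> NN m (int (Suc n) - int m) then svec m n i @ [Plus]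
      else if i \<le> NN m (int n) then svec m n i @ [Star]
      else svec m n (i - NN m (int n)) @ [Minus])"

definition Sset :: "nat \<Rightarrow> nat \<Rightarrow> sgn list set" where
  "Sset m n = {svec m n i | i. i \<in> {1..NN m (int n)}}"

definition Tset :: "nat \<Rightarrow> nat \<Rightarrow> real \<Rightarrow> sgn list set" where
  "Tset m n q = {s \<in> Sset m n. real (card {k. k < n \<and> s ! k = Minus}) = real n * q}"

definition Hent :: "real \<Rightarrow> real" where
  "Hent x = (if x = 0 \<or> x = 1 then 0 else - x * log 2 x - (1 - x) * log 2 (1 - x))"

definition Gfun :: "nat \<Rightarrow> real \<Rightarrow> real" where
  "Gfun m q = (1 - (real m - 1) * q) * Hent (q / (1 - (real m - 1) * q))"

end

theory Submission
  imports Defs "HOL-Real_Asymp.Real_Asymp"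
begin

text \<open>
  Give \<open>s \<in> S\<^sub>n\<close> the weight \<open>a\<^bsup>#-\<^esup> b\<^bsup>#+\<^esup>\<close> with \<open>a + b = 1\<close>; the recursion
  for \<open>S\<^sub>n\<close> makes these weights sum to 1. An invariant of the recursion gives
  \<open>#+ + m\<cdot>#- \<le> n + m - 1\<close>, so every \<open>s \<in> S\<^sub>n\<close> with \<open>k = nq\<close> minus signs
  weighs at least \<open>a\<^sup>k b\<^bsup>n+m-1-mk\<^esup>\<close>. With \<open>L = n - (m-1)k\<close> and \<open>a = k/L\<close> the
  reciprocal of this weight is \<open>2\<^bsup>L H(k/L)\<^esup> = 2\<^bsup>n G(m,q)\<^esup>\<close> up to a factor polynomial
  in \<open>n\<close>, which is absorbed into \<open>\<epsilon>\<^sub>m(n)\<close>.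
\<close>

lemma NN_nonpos: "k \<le> 0 \<Longrightarrow> NN m k = 1"
  by (subst NN.simps) auto

lemma NN_Suc: "m \<ge> 1 \<Longrightarrow> NN m (int (Suc n)) = NN m (int n) + NN m (int (Suc n) - int m)"
  by (subst NN.simps) auto

lemma NN_mono: "k \<le> l \<Longrightarrow> NN m k \<le> NN m l"
proof (induction l rule: int_ge_induct)
  case (step l)
  have "NN m l \<le> NN m (l + 1)"
    by (cases "l + 1 \<le> 0 \<or> m = 0") (auto simp: NN.simps[of m l] NN.simps[of m "l + 1"])
  with step.IH show ?case by linarith
qed simp

lemma length_svec: "length (svec m n i) = n"
  by (induction n arbitrary: i) auto

text \<open>For \<open>a + b = 1\<close> this is a probability distribution on \<open>S\<^sub>n\<close>: every position that
  may carry either sign is \<open>-\<close> with probability \<open>a\<close>.\<close>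

definition sign_weight :: "real \<Rightarrow> real \<Rightarrow> sgn list \<Rightarrow> real" where
  "sign_weight a b s = a ^ count_list s Minus * b ^ count_list s Plus"

lemma sign_weight_snoc [simp]:
  "sign_weight a b (s @ [Plus]) = b * sign_weight a b s"
  "sign_weight a b (s @ [Minus]) = a * sign_weight a b s"
  "sign_weight a b (s @ [Star]) = sign_weight a b s"
  by (simp_all add: sign_weight_def)

lemma sum_sign_weight_svec:
  assumes "m \<ge> 1" "a + b = 1"
  shows "(\<Sum>i=1..NN m (int n). sign_weight a b (svec m n i)) = 1"
proof (induction n)
  case 0
  show ?case by (simp add: NN_nonpos sign_weight_def)
next
  case (Suc n)
  define A where "A = NN m (int (Suc n) - int m)"
  define B where "B = NN m (int n)"
  let ?w = "\<lambda>n i. sign_weight a b (svec m n i)"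
  have "A \<le> B"
    unfolding A_def B_def by (rule NN_mono) (use assms(1) in simp)
  have split: "(\<Sum>i=1..B+A. f i) = (\<Sum>i=1..A. f i) + (\<Sum>i=A+1..B. f i) + (\<Sum>i=B+1..B+A. f i)"
    for f :: "nat \<Rightarrow> real"
    using \<open>A \<le> B\<close> sum.ub_add_nat[of 1 A f "B - A"] sum.ub_add_nat[of 1 B f A] by simp
  have "(\<Sum>i=1..NN m (int (Suc n)). ?w (Suc n) i) =
      (\<Sum>i=1..A. ?w (Suc n) i) + (\<Sum>i=A+1..B. ?w (Suc n) i) + (\<Sum>i=B+1..B+A. ?w (Suc n) i)"
    unfolding NN_Suc[OF assms(1)] A_def[symmetric] B_def[symmetric] by (rule split)
  also have "\<dots> = (\<Sum>i=1..A. b * ?w n i) + (\<Sum>i=A+1..B. ?w n i) + (\<Sum>i=1..A. a * ?w n i)"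
  proof -
    have "(\<Sum>i=1..A. ?w (Suc n) i) = (\<Sum>i=1..A. b * ?w n i)"
      by (intro sum.cong) (auto simp: A_def)
    moreover have "(\<Sum>i=A+1..B. ?w (Suc n) i) = (\<Sum>i=A+1..B. ?w n i)"
      by (intro sum.cong) (auto simp: A_def B_def)
    moreover have "(\<Sum>i=B+1..B+A. ?w (Suc n) i) = (\<Sum>i=1..A. ?w (Suc n) (i + B))"
      using sum.shift_bounds_cl_nat_ivl[of "?w (Suc n)" 1 B A] by (simp add: add.commute)
    moreover have "\<dots> = (\<Sum>i=1..A. a * ?w n i)"
      using \<open>A \<le> B\<close> by (intro sum.cong) (auto simp: A_def B_def)
    ultimately show ?thesis by simp
  qed
  also have "\<dots> = (\<Sum>i=1..A. ?w n i) + (\<Sum>i=A+1..B. ?w n i)"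
    using assms(2) by (simp add: sum.distrib flip: sum_distrib_left distrib_right)
  also have "\<dots> = (\<Sum>i=1..B. ?w n i)"
    using \<open>A \<le> B\<close> sum.ub_add_nat[of 1 A "?w n" "B - A"] by (simp del: svec.simps)
  finally show ?case
    using Suc.IH by (simp add: B_def)
qed

definition deficit :: "nat \<Rightarrow> sgn list \<Rightarrow> int" where
  "deficit m s = int (m - 1) * int (count_list s Minus) - int (count_list s Star)"

lemma deficit_snoc [simp]:
  "deficit m (s @ [Plus]) = deficit m s"
  "deficit m (s @ [Minus]) = deficit m s + int (m - 1)"
  "deficit m (s @ [Star]) = deficit m s - 1"
  by (simp_all add: deficit_def algebra_simps)

text \<open>The hypothesis on \<open>i\<close> says that \<open>s\<^sub>n\<^sup>(\<^sup>i\<^sup>)\<close> may be followed by a minus sign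
  after \<open>t\<close> further steps.\<close>

lemma deficit_svec_le:
  assumes "m \<ge> 1" "i \<le> NN m (int n)" "i \<le> NN m (int n + 1 - int m + int t)"
  shows "deficit m (svec m n i) \<le> int t"
  using assms(2,3)
proof (induction n arbitrary: i t)
  case 0
  then show ?case by (simp add: deficit_def)
next
  case (Suc n)
  define A where "A = NN m (int (Suc n) - int m)"
  define B where "B = NN m (int n)"
  have "A \<le> B"
    unfolding A_def B_def by (rule NN_mono) (use assms(1) in simp)
  consider "i \<le> A" | "A < i" "i \<le> B" | "B < i" by linarith
  then show ?case
  proof cases
    case 1
    have "A \<le> NN m (int n + 1 - int m + int t)"
      unfolding A_def by (rule NN_mono) simp
    with 1 \<open>A \<le> B\<close> have "deficit m (svec m n i) \<le> int t"
      by (intro Suc.IH) (auto simp: B_def)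
    with 1 show ?thesis by (simp add: A_def)
  next
    case 2
    have "deficit m (svec m n i) \<le> int (Suc t)"
      using 2 Suc.prems(2) by (intro Suc.IH) (auto simp: B_def algebra_simps)
    with 2 show ?thesis by (simp add: A_def B_def)
  next
    case 3
    have "i - B \<le> A"
      using Suc.prems(1) NN_Suc[OF assms(1), of n] by (simp add: A_def B_def)
    then have "deficit m (svec m n (i - B)) \<le> 0"
      using Suc.IH[of "i - B" 0] \<open>A \<le> B\<close> by (simp add: A_def B_def algebra_simps)
    moreover have "int (m - 1) \<le> int t"
    proof (rule ccontr)
      assume "\<not> int (m - 1) \<le> int t"
      then have "NN m (int (Suc n) + 1 - int m + int t) \<le> B"
        unfolding B_def by (intro NN_mono) simp
      with 3 Suc.prems(2) show False by simp
    qed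
    ultimately show ?thesis
      using 3 \<open>A \<le> B\<close> by (simp add: A_def B_def)
  qed
qed

lemma count_list_sgn_sum: "count_list s Plus + count_list s Minus + count_list s Star = length s"
proof (induction s)
  case (Cons x s)
  then show ?case by (cases x) auto
qed simp

lemma count_Plus_Minus_svec_le:
  assumes "m \<ge> 1" "i \<le> NN m (int n)"
  shows "count_list (svec m n i) Plus + m * count_list (svec m n i) Minus \<le> n + m - 1"
proof -
  let ?s = "svec m n i"
  have "deficit m ?s \<le> int (m - 1)"
    using deficit_svec_le[OF assms, of "m - 1"] assms by simp
  moreover have "count_list ?s Plus + count_list ?s Minus + count_list ?s Star = n"
    using length_svec[of m n i] by (simp add: count_list_sgn_sum)
  ultimately have "int (count_list ?s Plus) + int m * int (count_list ?s Minus) \<le> int n + int m - 1"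
    using assms(1) unfolding deficit_def by (simp add: algebra_simps)
  then show ?thesis
    by (simp flip: of_nat_mult)
qed

lemma Sset_eq_image: "Sset m n = svec m n ` {1..NN m (int n)}"
  unfolding Sset_def by auto

lemma count_Minus_Tset:
  assumes "s \<in> Tset m n q" "real n * q = real k"
  shows "count_list s Minus = k"
proof -
  have "length s = n"
    using assms(1) length_svec by (auto simp: Tset_def Sset_def)
  then have "card {k. k < n \<and> s ! k = Minus} = count_list s Minus"
    by (simp add: count_list_eq_length_filter length_filter_conv_card eq_commute)
  with assms show ?thesis
    unfolding Tset_def by simp
qed

lemma card_Tset_mult_weight_le:
  assumes "m \<ge> 1" "0 \<le> a" "0 \<le> b" "a + b = 1" "real n * q = real k"
  shows "real (card (Tset m n q)) * (a ^ k * b ^ (n + m - 1 - m * k)) \<le> 1"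
proof -
  let ?c = "a ^ k * b ^ (n + m - 1 - m * k)"
  have "Tset m n q \<subseteq> Sset m n" "finite (Sset m n)"
    by (auto simp: Tset_def Sset_eq_image)
  have weight_ge: "?c \<le> sign_weight a b s" if "s \<in> Tset m n q" for s
  proof -
    from that obtain i where "i \<le> NN m (int n)" "s = svec m n i"
      by (auto simp: Tset_def Sset_def)
    with count_Plus_Minus_svec_le[OF assms(1)] count_Minus_Tset[OF that assms(5)]
    have "count_list s Plus \<le> n + m - 1 - m * k" "count_list s Minus = k"
      by force+
    moreover have "b \<le> 1"
      using assms(2,4) by simp
    ultimately show ?thesis
      unfolding sign_weight_def using assms(2,3) by (simp add: mult_left_mono power_decreasing)
  qed
  have "real (card (Tset m n q)) * ?c = (\<Sum>s\<in>Tset m n q. ?c)"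
    by simp
  also have "\<dots> \<le> (\<Sum>s\<in>Tset m n q. sign_weight a b s)"
    using weight_ge by (rule sum_mono)
  also have "\<dots> \<le> (\<Sum>s\<in>Sset m n. sign_weight a b s)"
    using \<open>Tset m n q \<subseteq> Sset m n\<close> \<open>finite (Sset m n)\<close> assms(2,3)
    by (intro sum_mono2) (auto simp: sign_weight_def)
  also have "\<dots> \<le> (\<Sum>i=1..NN m (int n). sign_weight a b (svec m n i))"
    unfolding Sset_eq_image using assms(2,3)
    by (intro sum_image_le[unfolded o_def]) (auto simp: sign_weight_def)
  also have "\<dots> = 1"
    using sum_sign_weight_svec[OF assms(1,4)] .
  finally show ?thesis .
qed

lemma powr_Hent:
  assumes "0 < x" "x < 1"
  shows "2 powr (L * Hent x) = inverse (x powr (L * x) * (1 - x) powr (L * (1 - x)))"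
  using assms by (simp add: Hent_def powr_def log_def exp_minus exp_add[symmetric] field_simps)

lemma Gfun_eq_Hent:
  assumes "n > 0"
  shows "real n * Gfun m (real k / real n) =
    (real n - (real m - 1) * real k) * Hent (real k / (real n - (real m - 1) * real k))"
proof -
  have "1 - (real m - 1) * (real k / real n) = (real n - (real m - 1) * real k) / real n"
    using assms by (simp add: field_simps)
  then show ?thesis
    using assms by (simp add: Gfun_def)
qed

lemma one_plus_divide_power_le_exp:
  assumes "0 \<le> x"
  shows "(1 + x / real j) ^ j \<le> exp x"
proof (cases "j = 0")
  case False
  have "(1 + x / real j) ^ j \<le> exp (x / real j) ^ j"
    using assms by (intro power_mono exp_ge_add_one_self) auto
  also have "\<dots> = exp x"
    using False by (simp flip: exp_of_nat_mult)
  finally show ?thesis .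
qed (use assms in simp)

lemma card_Tset_le_one:
  assumes "m \<ge> 1" "real n * q = 0"
  shows "real (card (Tset m n q)) \<le> 1"
  using card_Tset_mult_weight_le[OF assms(1), of 0 1 n q 0] assms(2) by simp

lemma card_Tset_le_saturated:
  assumes "m \<ge> 1" "m * k = n" "real n * q = real k"
  shows "real (card (Tset m n q)) \<le> exp 1 * (real k + 1) ^ (m - 1)"
proof -
  \<comment> \<open>The entropy-optimal weight \<open>k/L\<close> is 1 here; \<open>k/(k+1)\<close> loses only a factor \<open>e\<close>.\<close>
  define a where "a = real k / (real k + 1)"
  define b where "b = 1 / (real k + 1)"
  have "a + b = 1"
    by (simp add: a_def b_def field_simps)
  moreover have "n + m - 1 - m * k = m - 1"
    using assms(1,2) by simp
  ultimately have "real (card (Tset m n q)) * (a ^ k * b ^ (m - 1)) \<le> 1"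
    using card_Tset_mult_weight_le[OF assms(1), of a b n q k] assms(3)
    by (simp add: a_def b_def)
  moreover have "a ^ k * b ^ (m - 1) > 0"
    by (cases "k = 0") (simp_all add: a_def b_def)
  ultimately have "real (card (Tset m n q)) \<le> 1 / (a ^ k * b ^ (m - 1))"
    by (simp add: pos_le_divide_eq)
  also have "\<dots> = (1 + 1 / real k) ^ k * (real k + 1) ^ (m - 1)"
    by (cases "k = 0") (simp_all add: a_def b_def field_simps)
  also have "\<dots> \<le> exp 1 * (real k + 1) ^ (m - 1)"
    using one_plus_divide_power_le_exp[of 1 k] by (intro mult_right_mono) auto
  finally show ?thesis .
qed

lemma card_Tset_le_entropy:
  assumes "m \<ge> 1" "0 < k" "m * k < n" "real n * q = real k"
  defines "L \<equiv> real n - (real m - 1) * real k"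
  shows "real (card (Tset m n q)) \<le> real n ^ (m - 1) * 2 powr (L * Hent (real k / L))"
proof -
  \<comment> \<open>\<open>x = k/L\<close> maximizes \<open>x\<^sup>k (1-x)\<^bsup>L-k\<^esup>\<close>.\<close>
  define x where "x = real k / L"
  have "L - real k = real (n - m * k)"
    using assms(3) by (simp add: L_def algebra_simps)
  moreover have "n - m * k \<ge> 1"
    using assms(3) by simp
  ultimately have "L - real k \<ge> 1"
    by (metis of_nat_1 of_nat_le_iff)
  have "0 < L"
    using \<open>L - real k \<ge> 1\<close> by linarith
  have "0 < x" "x < 1"
    using assms(2) \<open>0 < L\<close> \<open>L - real k \<ge> 1\<close> by (simp_all add: x_def field_simps)
  have "L * x = real k"
    using \<open>0 < L\<close> by (simp add: x_def)
  then have "L * (1 - x) = real (n - m * k)"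
    using \<open>L - real k = real (n - m * k)\<close> by (simp add: algebra_simps)
  define w where "w = x ^ k * (1 - x) ^ (n - m * k)"
  have "n + m - 1 - m * k = (n - m * k) + (m - 1)"
    using assms(1,3) by simp
  then have "real (card (Tset m n q)) * (w * (1 - x) ^ (m - 1)) \<le> 1"
    using card_Tset_mult_weight_le[OF assms(1), of x "1 - x" n q k] assms(4) \<open>0 < x\<close> \<open>x < 1\<close>
    by (simp add: w_def power_add mult_ac)
  moreover have "w * (1 - x) ^ (m - 1) > 0"
    using \<open>0 < x\<close> \<open>x < 1\<close> by (simp add: w_def)
  ultimately have "real (card (Tset m n q)) \<le> 1 / (w * (1 - x) ^ (m - 1))"
    by (simp add: pos_le_divide_eq)
  also have "\<dots> = (1 / (1 - x)) ^ (m - 1) * inverse w"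
    by (simp add: field_simps)
  also have "\<dots> \<le> real n ^ (m - 1) * inverse w"
  proof (intro mult_right_mono power_mono)
    have "1 / (1 - x) = L / (L - real k)"
      using \<open>0 < L\<close> \<open>x < 1\<close> by (simp add: x_def field_simps)
    also have "\<dots> \<le> L"
      using \<open>L - real k \<ge> 1\<close> \<open>0 < L\<close> by (simp add: divide_le_eq)
    also have "\<dots> \<le> real n"
      using assms(1) by (simp add: L_def)
    finally show "1 / (1 - x) \<le> real n" .
  qed (use \<open>0 < x\<close> \<open>x < 1\<close> in \<open>simp_all add: w_def\<close>)
  also have "inverse w = 2 powr (L * Hent x)"
    using powr_Hent[OF \<open>0 < x\<close> \<open>x < 1\<close>, of L] \<open>0 < x\<close> \<open>x < 1\<close>
    by (simp add: \<open>L * x = real k\<close> \<open>L * (1 - x) = real (n - m * k)\<close> powr_realpow w_def)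
  finally show ?thesis
    unfolding x_def .
qed

lemma card_Tset_le:
  assumes "m \<ge> 1" "n \<ge> 1" "q \<in> {0..1 / real m}" "real n * q \<in> \<int>"
  shows "real (card (Tset m n q)) \<le> exp 1 * (real n + 1) ^ m * 2 powr (real n * Gfun m q)"
proof -
  obtain z where "real n * q = of_int z"
    using assms(4) by (auto elim: Ints_cases)
  moreover have "0 \<le> real n * q"
    using assms(3) by simp
  ultimately obtain k where k: "real n * q = real k"
    by (metis of_int_0_le_iff of_int_of_nat_eq nonneg_eq_int)
  have "real (m * k) = real n * (real m * q)"
    using k by (simp add: algebra_simps)
  also have "\<dots> \<le> real n"
    using assms(1,3) by (intro mult_left_le) (auto simp: field_simps)
  finally have "m * k \<le> n"
    by linarith
  define L where "L = real n - (real m - 1) * real k"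
  have "q = real k / real n"
    using k assms(2) by (simp add: field_simps)
  then have G: "real n * Gfun m q = L * Hent (real k / L)"
    using Gfun_eq_Hent[of n m k] assms(2) by (simp add: L_def)
  define B where "B = exp 1 * (real n + 1) ^ m"
  have "k \<le> n"
    using \<open>m * k \<le> n\<close> assms(1) by (metis le_trans mult_1 mult_le_mono1)
  have "(real n + 1) ^ (m - 1) \<le> (real n + 1) ^ m"
    by (intro power_increasing) auto
  then have "exp 1 * (real k + 1) ^ (m - 1) \<le> B"
    unfolding B_def using \<open>k \<le> n\<close> power_mono[of "real k + 1" "real n + 1" "m - 1"]
    by (intro mult_left_mono) auto
  have "(real n + 1) ^ m \<le> B"
    using mult_right_mono[of 1 "exp 1" "(real n + 1) ^ m"] by (simp add: B_def)
  then have "real n ^ (m - 1) \<le> B" "1 \<le> B"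
    using \<open>(real n + 1) ^ (m - 1) \<le> (real n + 1) ^ m\<close> power_mono[of "real n" "real n + 1" "m - 1"]
      one_le_power[of "real n + 1" m] by linarith+
  consider "k = 0" | "0 < k" "m * k = n" | "0 < k" "m * k < n"
    using \<open>m * k \<le> n\<close> by linarith
  then have "real (card (Tset m n q)) \<le> B * 2 powr (L * Hent (real k / L))"
  proof cases
    case 1
    then have "real (card (Tset m n q)) \<le> 1"
      using card_Tset_le_one[OF assms(1), of n q] k by simp
    with 1 \<open>1 \<le> B\<close> show ?thesis
      by (simp add: Hent_def)
  next
    case 2
    then have "real k / L = 1"
      by (simp add: L_def algebra_simps flip: of_nat_mult)
    then show ?thesis
      using card_Tset_le_saturated[OF assms(1) \<open>m * k = n\<close> k] \<open>exp 1 * (real k + 1) ^ (m - 1) \<le> B\<close>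
      by (simp add: Hent_def)
  next
    case 3
    then have "real (card (Tset m n q)) \<le> real n ^ (m - 1) * 2 powr (L * Hent (real k / L))"
      using card_Tset_le_entropy[OF assms(1) _ _ k] by (simp add: L_def)
    also have "\<dots> \<le> B * 2 powr (L * Hent (real k / L))"
      using \<open>real n ^ (m - 1) \<le> B\<close> by (rule mult_right_mono) simp
    finally show ?thesis .
  qed
  then show ?thesis
    unfolding G B_def .
qed

theorem lemma3:
  fixes m :: nat
  assumes "m \<ge> 1"
  shows "\<exists>eps :: nat \<Rightarrow> real. eps \<longlonglongrightarrow> 0 \<and>
    (\<forall>n q. n \<ge> 1 \<longrightarrow> q \<in> {0..1 / real m} \<longrightarrow> real n * q \<in> \<int> \<longrightarrow>
       real (card (Tset m n q)) < 2 powr (real n * (Gfun m q + eps n)))"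
proof (intro exI conjI allI impI)
  define Y where "Y n = 2 * exp 1 * (real n + 1) ^ m" for n :: nat
  show "(\<lambda>n. log 2 (Y n) / real n) \<longlonglongrightarrow> 0"
    unfolding Y_def by real_asymp
  fix n q
  assume "n \<ge> 1" "q \<in> {0..1 / real m}" "real n * q \<in> \<int>"
  then have "real (card (Tset m n q)) \<le> Y n / 2 * 2 powr (real n * Gfun m q)"
    using card_Tset_le[OF assms] by (simp add: Y_def)
  also have "\<dots> < Y n * 2 powr (real n * Gfun m q)"
    by (simp add: Y_def)
  also have "\<dots> = 2 powr (real n * (Gfun m q + log 2 (Y n) / real n))"
    using \<open>n \<ge> 1\<close> by (simp add: Y_def distrib_left powr_add)
  finally show "real (card (Tset m n q)) < 2 powr (real n * (Gfun m q + log 2 (Y n) / real n))" .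
qed

end
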